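(* There exist a sequence $\{a_n\}_{n\in\mathbb Z}\in\ell^1(\mathbb Z)$ with $a_n>0$ for all $n$, and an infinite sequence $\{n_k\}_{k\ge1}\subset\mathbb N$ with $n_{k+1}>2n_k$ for all $k\ge1$, such that the entire functions $$h(z)=\sin\pi z\sum_{n\in\mathbb Z}\frac{a_n}{z-n},\qquad S(z)=\sin\pi z\sum_{n\in\mathbb Z}\frac{a_n^2}{z-n}$$ both vanish at the points $s_k=n_k+\tfrac12$, $k\in\mathbb N$, and $a_{n_k}=\alpha_kk^{-2}$ with $\alpha_k\in(1,3)$ for all $k\in\mathbb N$. *)

theory Defs
  imports "HOL-Analysis.Analysis"
begin

definition sin_cauchy :: "(int \<Rightarrow> real) \<Rightarrow> complex \<Rightarrow> complex" where
  "sin_cauchy b z = sin (of_real pi * z) * (\<Sum>\<^sub>\<infinity> n\<in>(UNIV::int set). of_real (b n) / (z - of_int n))"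

end

theory Submission
  imports Defs
begin

text \<open>
  We take n_k = 1000 * 256^k. At the three positions n_k - 1, n_k, n_k + 1 we put the prescribed
  weight t_k = 6/k^2 and two unknowns x_k, y_k; everywhere else a_n = (1/4)^|n|. At s_k the
  Cauchy sum of phi(a_n) (phi = id or squaring) is the local part
  (2/3) phi(t_k) + 2 phi(x_k) - 2 phi(y_k) plus a remote part that is tiny (of order 16^(-k))
  because all other blocks are very far away. Cancellation of both sums is therefore the pair
  of equations y - x = t/3 + R/2, y^2 - x^2 = t^2/3 + P/2, which has an explicit solution
  (x, y) depending on the remote parts R, P. Since R, P depend on all unknowns, we obtain a
  fixed-point problem; the induced map on the box [0,5]^(N x bool) halves sup distances, so a
  contraction principle yields the solution.
\<close>

subsection \<open>A contraction principle for sup-norm boxes\<close>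

lemma halving_steps_converge:
  fixes f :: "nat \<Rightarrow> real"
  assumes step: "\<And>m. \<bar>f (Suc m) - f m\<bar> \<le> c / 2^m"
  shows "convergent f" and "\<bar>lim f - f m\<bar> \<le> 2*c/2^m"
proof -
  have tail_sum: "\<bar>f (m + d) - f m\<bar> \<le> 2*c/2^m - 2*c/2^(m+d)" for m d
  proof (induction d)
    case (Suc d)
    have "\<bar>f (m + Suc d) - f m\<bar> \<le> \<bar>f (Suc (m + d)) - f (m + d)\<bar> + \<bar>f (m + d) - f m\<bar>"
      by simp
    also have "\<dots> \<le> c/2^(m+d) + (2*c/2^m - 2*c/2^(m+d))"
      using step Suc by (intro add_mono) auto
    also have "\<dots> = 2*c/2^m - 2*c/2^(m + Suc d)" by (simp add: field_simps)
    finally show ?case .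
  qed simp
  have "c \<ge> 0" using order_trans[OF abs_ge_zero step[of 0]] by simp
  then have tail: "\<bar>f n - f m\<bar> \<le> 2*c/2^m" if "m \<le> n" for m n
  proof -
    have "0 \<le> 2*c/2^n" using \<open>c \<ge> 0\<close> by simp
    then show ?thesis using tail_sum[of m "n - m"] that by simp
  qed
  have "(\<lambda>m. 2*c/2^m) \<longlonglongrightarrow> 0"
    by (intro tendsto_divide_0[OF tendsto_const]) (simp add: filterlim_realpow_sequentially_gt1)
  have "Cauchy f"
  proof (rule metric_CauchyI)
    fix e :: real assume "e > 0"
    then have "e/2 > 0" by simp
    then have "\<forall>\<^sub>F M in sequentially. 2*c/2^M < e/2"
      using \<open>(\<lambda>m. 2*c/2^m) \<longlonglongrightarrow> 0\<close> by (simp only: order_tendsto_iff)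
    then obtain M where M: "2*c/2^M < e/2" by (auto simp: eventually_sequentially)
    have "dist (f m) (f n) < e" if "M \<le> m" "M \<le> n" for m n
    proof -
      have "\<bar>f m - f M\<bar> \<le> 2*c/2^M" "\<bar>f n - f M\<bar> \<le> 2*c/2^M"
        using tail that by blast+
      then show ?thesis using M by (simp add: dist_real_def)
    qed
    then show "\<exists>M. \<forall>m\<ge>M. \<forall>n\<ge>M. dist (f m) (f n) < e" by blast
  qed
  then show "convergent f" by (simp add: Cauchy_convergent_iff)
  then have "(\<lambda>n. \<bar>f n - f m\<bar>) \<longlonglongrightarrow> \<bar>lim f - f m\<bar>"
    by (intro tendsto_intros) (simp add: convergent_LIMSEQ_iff)
  then show "\<bar>lim f - f m\<bar> \<le> 2*c/2^m"
    by (rule LIMSEQ_le_const2) (use tail in auto)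
qed

lemma box_contraction_fixpoint:
  fixes T :: "('i \<Rightarrow> real) \<Rightarrow> ('i \<Rightarrow> real)" and c :: real
  defines "B \<equiv> {z. \<forall>i. 0 \<le> z i \<and> z i \<le> c}"
  assumes c: "0 \<le> c"
    and into: "\<And>z i. z \<in> B \<Longrightarrow> 0 \<le> T z i \<and> T z i \<le> c"
    and halving: "\<And>z z' \<delta>. z \<in> B \<Longrightarrow> z' \<in> B \<Longrightarrow> \<forall>i. \<bar>z i - z' i\<bar> \<le> \<delta>
                    \<Longrightarrow> \<forall>i. \<bar>T z i - T z' i\<bar> \<le> \<delta>/2"
  shows "\<exists>z\<in>B. T z = z"
proof -
  define zs where "zs m = (T ^^ m) (\<lambda>_. 0)" for m
  have zs_in: "zs m \<in> B" for m
    by (induction m) (auto simp: zs_def B_def c into)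
  have step: "\<bar>zs (Suc m) i - zs m i\<bar> \<le> c / 2^m" for m i
  proof (induction m arbitrary: i)
    case 0
    have "0 \<le> zs 1 i" "zs 1 i \<le> c" "0 \<le> zs 0 i" "zs 0 i \<le> c"
      using zs_in[of 0] zs_in[of 1] by (auto simp: B_def)
    then show ?case by simp
  next
    case (Suc m)
    have "\<forall>i. \<bar>T (zs (Suc m)) i - T (zs m) i\<bar> \<le> (c/2^m)/2"
      by (rule halving[OF zs_in zs_in]) (use Suc in auto)
    then show ?case by (simp add: zs_def mult.commute)
  qed
  define \<zeta> where "\<zeta> i = lim (\<lambda>m. zs m i)" for i
  have lim: "(\<lambda>m. zs m i) \<longlonglongrightarrow> \<zeta> i" for i
    using halving_steps_converge(1)[of "\<lambda>m. zs m i", OF step] by (simp add: \<zeta>_def convergent_LIMSEQ_iff)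
  have close: "\<bar>\<zeta> i - zs m i\<bar> \<le> 2*c/2^m" for m i
    unfolding \<zeta>_def by (rule halving_steps_converge(2)[of "\<lambda>m. zs m i", OF step])
  have "\<zeta> \<in> B"
  proof -
    have "0 \<le> \<zeta> i \<and> \<zeta> i \<le> c" for i
    proof
      show "0 \<le> \<zeta> i" by (rule LIMSEQ_le_const[OF lim]) (use zs_in in \<open>auto simp: B_def\<close>)
      show "\<zeta> i \<le> c" by (rule LIMSEQ_le_const2[OF lim]) (use zs_in in \<open>auto simp: B_def\<close>)
    qed
    then show ?thesis by (simp add: B_def)
  qed
  have "T \<zeta> i = \<zeta> i" for i
  proof -
    have bound: "norm (zs (Suc m) i - T \<zeta> i) \<le> c/2^m" for m
    proof -
      have "\<forall>i. \<bar>T \<zeta> i - T (zs m) i\<bar> \<le> (2*c/2^m)/2"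
        by (rule halving[OF \<open>\<zeta> \<in> B\<close> zs_in]) (use close in auto)
      then have "\<bar>T \<zeta> i - zs (Suc m) i\<bar> \<le> c/2^m" by (simp add: zs_def)
      then show ?thesis by (metis abs_minus_commute real_norm_def)
    qed
    have "(\<lambda>m. c/2^m) \<longlonglongrightarrow> 0"
      by (intro tendsto_divide_0[OF tendsto_const]) (simp add: filterlim_realpow_sequentially_gt1)
    then have "(\<lambda>m. zs (Suc m) i - T \<zeta> i) \<longlonglongrightarrow> 0"
      by (rule Lim_null_comparison[rotated]) (use bound in \<open>simp add: always_eventually\<close>)
    then have "(\<lambda>m. zs (Suc m) i) \<longlonglongrightarrow> T \<zeta> i" by (rule LIM_zero_cancel)
    moreover have "(\<lambda>m. zs (Suc m) i) \<longlonglongrightarrow> \<zeta> i" using lim by (rule LIMSEQ_Suc)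
    ultimately show ?thesis using LIMSEQ_unique by blast
  qed
  then show ?thesis using \<open>\<zeta> \<in> B\<close> by blast
qed

subsection \<open>The block equations and their explicit solution\<close>

text \<open>Around the k-th centre the unknowns x, y have to satisfy y - x = t/3 + R/2 and
  y^2 - x^2 = t^2/3 + P/2, where t is the prescribed left weight and R, P are the
  contributions of all remote terms.\<close>
definition gap :: "real \<Rightarrow> real \<Rightarrow> real" where
  "gap t R = t/3 + R/2"

definition sq_gap :: "real \<Rightarrow> real \<Rightarrow> real" where
  "sq_gap t P = t^2/3 + P/2"

definition sol_x :: "real \<Rightarrow> real \<Rightarrow> real \<Rightarrow> real" where
  "sol_x t R P = (sq_gap t P / gap t R - gap t R) / 2"

definition sol_y :: "real \<Rightarrow> real \<Rightarrow> real \<Rightarrow> real" where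
  "sol_y t R P = (sq_gap t P / gap t R + gap t R) / 2"

lemma sol_solves:
  assumes "gap t R \<noteq> 0"
  shows "sol_y t R P - sol_x t R P = gap t R"
    and "(sol_y t R P)^2 - (sol_x t R P)^2 = sq_gap t P"
proof -
  show diff: "sol_y t R P - sol_x t R P = gap t R"
    by (simp add: sol_x_def sol_y_def field_simps)
  have sum: "sol_y t R P + sol_x t R P = sq_gap t P / gap t R"
    by (simp add: sol_x_def sol_y_def field_simps)
  have "(sol_y t R P)^2 - (sol_x t R P)^2
        = (sol_y t R P - sol_x t R P) * (sol_y t R P + sol_x t R P)"
    by (simp add: power2_eq_square algebra_simps)
  then show "(sol_y t R P)^2 - (sol_x t R P)^2 = sq_gap t P"
    unfolding diff sum using assms by simp
qed

text \<open>With t = 6/u and remote terms of sizes 1/(20u) and 1/u^2 the solution stays in the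
  window 1/u < x < 3/u, 0 < y <= 5/u; this is what later gives a_(n_k) = alpha_k/k^2 with
  alpha_k in (1,3).\<close>
lemma sol_bounds:
  assumes u: "u \<ge> 1" and R: "\<bar>R\<bar> \<le> 1/(20*u)" and P: "\<bar>P\<bar> \<le> 1/u^2"
  shows "gap (6/u) R \<ge> 1/u" "0 < sq_gap (6/u) P" "sq_gap (6/u) P \<le> 18/u^2"
    "1/u < sol_x (6/u) R P" "sol_x (6/u) R P < 3/u"
    "0 < sol_y (6/u) R P" "sol_y (6/u) R P \<le> 5/u"
proof -
  have u0: "u > 0" using u by simp
  (* Rescale: gap = \<delta>/u and sq_gap = \<epsilon>/u^2 with \<delta> near 2 and \<epsilon> near 12. *)
  define \<delta> where "\<delta> = 2 + R*u/2"
  define \<epsilon> where "\<epsilon> = 12 + P*u^2/2"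
  have D: "gap (6/u) R = \<delta> / u" using u0 by (simp add: gap_def \<delta>_def field_simps)
  have E: "sq_gap (6/u) P = \<epsilon> / u^2"
    using u0 by (simp add: sq_gap_def \<epsilon>_def field_simps power2_eq_square)
  have "\<bar>R*u\<bar> \<le> 1/20" using R u0 by (simp add: abs_mult field_simps)
  then have d: "2 - 1/40 \<le> \<delta>" "\<delta> \<le> 2 + 1/40" unfolding \<delta>_def by (auto simp: abs_le_iff)
  have "\<bar>P*u^2\<bar> \<le> 1" using P u0 by (simp add: abs_mult field_simps)
  then have e: "23/2 \<le> \<epsilon>" "\<epsilon> \<le> 25/2" unfolding \<epsilon>_def by (auto simp: abs_le_iff)
  have q1: "(23/2)/(2+1/40) \<le> \<epsilon>/\<delta>" using d e by (intro frac_le) auto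
  have q2: "\<epsilon>/\<delta> \<le> (25/2)/(2-1/40)" using d e by (intro frac_le) auto
  have X: "sol_x (6/u) R P = ((\<epsilon>/\<delta> - \<delta>)/2) / u"
    and Y: "sol_y (6/u) R P = ((\<epsilon>/\<delta> + \<delta>)/2) / u"
    unfolding sol_x_def sol_y_def D E using u0 d by (simp_all add: field_simps power2_eq_square)
  have x: "1 < (\<epsilon>/\<delta> - \<delta>)/2" "(\<epsilon>/\<delta> - \<delta>)/2 < 3"
    and y: "0 < (\<epsilon>/\<delta> + \<delta>)/2" "(\<epsilon>/\<delta> + \<delta>)/2 \<le> 5"
    using q1 q2 d by simp_all
  show "1/u < sol_x (6/u) R P" "sol_x (6/u) R P < 3/u"
    unfolding X by (intro divide_strict_right_mono x u0)+
  show "0 < sol_y (6/u) R P" unfolding Y using y(1) u0 by simp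
  show "sol_y (6/u) R P \<le> 5/u" unfolding Y by (rule divide_right_mono[OF y(2)]) (use u0 in simp)
  show "gap (6/u) R \<ge> 1/u" unfolding D using d u0 by (intro divide_right_mono) auto
  show "0 < sq_gap (6/u) P" "sq_gap (6/u) P \<le> 18/u^2"
    unfolding E using e u0 by (auto intro: divide_right_mono)
qed

text \<open>Combined with the smallness of the remote terms' own dependence on the
  unknowns this makes the update map a contraction.\<close>
lemma sol_lipschitz:
  assumes u: "u \<ge> 1"
    and R: "\<bar>R1\<bar> \<le> 1/(20*u)" "\<bar>R2\<bar> \<le> 1/(20*u)" and P: "\<bar>P1\<bar> \<le> 1/u^2" "\<bar>P2\<bar> \<le> 1/u^2"
  shows "\<bar>sol_x (6/u) R1 P1 - sol_x (6/u) R2 P2\<bar> \<le> (u/4) * \<bar>P1 - P2\<bar> + 5 * \<bar>R1 - R2\<bar>"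
    and "\<bar>sol_y (6/u) R1 P1 - sol_y (6/u) R2 P2\<bar> \<le> (u/4) * \<bar>P1 - P2\<bar> + 5 * \<bar>R1 - R2\<bar>"
proof -
  have u0: "u > 0" using u by simp
  define D1 D2 E1 E2 where
    "D1 = gap (6/u) R1" "D2 = gap (6/u) R2" "E1 = sq_gap (6/u) P1" "E2 = sq_gap (6/u) P2"
  have D1: "D1 \<ge> 1/u" and D2: "D2 \<ge> 1/u" and E2: "0 < E2" "E2 \<le> 18/u^2"
    using sol_bounds[OF u R(1) P(1)] sol_bounds[OF u R(2) P(2)] by (simp_all add: D1_D2_E1_E2_def)
  have pos: "D1 > 0" "D2 > 0" using D1 D2 u0 by (smt (verit) divide_pos_pos)+
  have "D1 - D2 = (R1 - R2)/2" by (simp add: D1_D2_E1_E2_def gap_def field_simps)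
  then have aD: "\<bar>D1 - D2\<bar> = \<bar>R1 - R2\<bar>/2" by (simp only: abs_divide)
  have "E1 - E2 = (P1 - P2)/2" by (simp add: D1_D2_E1_E2_def sq_gap_def field_simps)
  then have aE: "\<bar>E1 - E2\<bar> = \<bar>P1 - P2\<bar>/2" by (simp only: abs_divide)
  have inv1: "1/D1 \<le> u" and inv2: "1/D2 \<le> u" using D1 D2 u0 pos by (simp_all add: field_simps)
  have t1: "\<bar>(E1 - E2)/D1\<bar> \<le> u * \<bar>E1 - E2\<bar>"
  proof -
    have "\<bar>(E1 - E2)/D1\<bar> = \<bar>E1 - E2\<bar> * (1/D1)" using pos by (simp add: abs_divide)
    also have "\<dots> \<le> \<bar>E1 - E2\<bar> * u" by (intro mult_left_mono inv1) simp
    finally show ?thesis by (simp add: mult.commute)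
  qed
  have t2: "\<bar>E2 * (D2 - D1) / (D1*D2)\<bar> \<le> 18 * \<bar>D1 - D2\<bar>"
  proof -
    have "\<bar>E2 * (D2 - D1) / (D1*D2)\<bar> = E2 * ((1/D1) * (1/D2)) * \<bar>D1 - D2\<bar>"
      using pos E2 by (simp add: abs_divide abs_mult abs_minus_commute)
    also have "\<dots> \<le> (18/u^2) * (u * u) * \<bar>D1 - D2\<bar>"
      using pos E2 u0 inv1 inv2 by (intro mult_right_mono mult_mono) auto
    also have "\<dots> = 18 * \<bar>D1 - D2\<bar>" using u0 by (simp add: power2_eq_square)
    finally show ?thesis .
  qed
  have split: "E1/D1 - E2/D2 = (E1 - E2)/D1 + E2 * (D2 - D1) / (D1*D2)"
    using pos by (simp add: field_simps)
  have "\<bar>E1/D1 - E2/D2\<bar> \<le> u * \<bar>E1 - E2\<bar> + 18 * \<bar>D1 - D2\<bar>"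
    unfolding split using t1 t2 abs_triangle_ineq[of "(E1 - E2)/D1" "E2 * (D2 - D1) / (D1*D2)"] by linarith
  then have q: "\<bar>E1/D1 - E2/D2\<bar> \<le> (u/2) * \<bar>P1 - P2\<bar> + 9 * \<bar>R1 - R2\<bar>"
    unfolding aE aD by simp
  have ex: "sol_x (6/u) R1 P1 - sol_x (6/u) R2 P2 = ((E1/D1 - E2/D2) - (D1 - D2))/2"
    and ey: "sol_y (6/u) R1 P1 - sol_y (6/u) R2 P2 = ((E1/D1 - E2/D2) + (D1 - D2))/2"
    unfolding sol_x_def sol_y_def D1_D2_E1_E2_def by (simp_all add: field_simps)
  show "\<bar>sol_x (6/u) R1 P1 - sol_x (6/u) R2 P2\<bar> \<le> (u/4) * \<bar>P1 - P2\<bar> + 5 * \<bar>R1 - R2\<bar>"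
    unfolding ex using q aD abs_triangle_ineq4[of "E1/D1 - E2/D2" "D1 - D2"]
    by (simp add: abs_divide) (use abs_ge_zero[of "R1 - R2"] in linarith)
  show "\<bar>sol_y (6/u) R1 P1 - sol_y (6/u) R2 P2\<bar> \<le> (u/4) * \<bar>P1 - P2\<bar> + 5 * \<bar>R1 - R2\<bar>"
    unfolding ey using q aD abs_triangle_ineq[of "E1/D1 - E2/D2" "D1 - D2"]
    by (simp add: abs_divide) (use abs_ge_zero[of "R1 - R2"] in linarith)
qed

definition centre :: "nat \<Rightarrow> nat" where
  "centre j = 1000 * 256^j"

definition node :: "nat \<Rightarrow> real" where
  "node k = real (centre k) + 1/2"

definition spot :: "nat \<Rightarrow> int" where
  "spot m = int (centre (m div 3 + 1)) + int (m mod 3) - 1"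

lemma spot_block:
  "spot (3*j) = int (centre (Suc j)) - 1" "spot (3*j+1) = int (centre (Suc j))"
  "spot (3*j+2) = int (centre (Suc j)) + 1"
proof -
  have "(3*j) div 3 = j" "(3*j+1) div 3 = j" "(3*j+2) div 3 = j"
    "(3*j) mod 3 = 0" "(3*j+1) mod 3 = 1" "(3*j+2) mod 3 = 2"
    by presburger+
  then show "spot (3*j) = int (centre (Suc j)) - 1" "spot (3*j+1) = int (centre (Suc j))"
    "spot (3*j+2) = int (centre (Suc j)) + 1"
    by (simp_all add: spot_def)
qed

lemma spot_separation:
  assumes "m div 3 + 1 \<noteq> k"
  shows "\<bar>node k - real_of_int (spot m)\<bar> \<ge> 500 * 2^(4*k+m)"
proof -
  define j where "j = m div 3 + 1"
  have "m < 3*j" unfolding j_def by presburger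
  have spot: "real_of_int (spot m) = 1000 * 256^j + real (m mod 3) - 1"
    by (simp add: spot_def centre_def j_def)
  have node: "node k = 1000 * 256^k + 1/2" by (simp add: node_def centre_def)
  have pow: "(2::real)^(4*k+m) \<le> 256^i" if "k \<le> i" "j \<le> i" for i
  proof -
    have "(2::real)^(4*k+m) \<le> 2^(8*i)"
      by (rule power_increasing) (use that \<open>m < 3*j\<close> in auto)
    then show ?thesis by (simp add: power_mult)
  qed
  have "real (m mod 3) \<le> 2" "(1::real) \<le> 256^j" by simp_all
  consider "j < k" | "k < j" using assms j_def by linarith
  then show ?thesis
  proof cases
    case 1
    have "(256::real)^j * 256 \<le> 256^k"
      using power_increasing[of "Suc j" k "256::real"] 1 by simp
    moreover have "(2::real)^(4*k+m) \<le> 256^k" using 1 by (intro pow) auto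
    ultimately have "node k - real_of_int (spot m) \<ge> 500 * 2^(4*k+m)"
      unfolding spot node using \<open>real (m mod 3) \<le> 2\<close> \<open>1 \<le> 256^j\<close> by linarith
    then show ?thesis by linarith
  next
    case 2
    have "(256::real)^k * 256 \<le> 256^j"
      using power_increasing[of "Suc k" j "256::real"] 2 by simp
    moreover have "(2::real)^(4*k+m) \<le> 256^j" using 2 by (intro pow) auto
    ultimately have "real_of_int (spot m) - node k \<ge> 500 * 2^(4*k+m)"
      unfolding spot node using \<open>1 \<le> 256^j\<close> by linarith
    then show ?thesis by linarith
  qed
qed

text \<open>Distinct indices give distinct positions: within a block the offsets differ, and
  different blocks are separated by the previous estimate.\<close>
lemma inj_spot: "inj spot"
proof (rule injI)
  fix m m' assume eq: "spot m = spot m'"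
  show "m = m'"
  proof (cases "m div 3 = m' div 3")
    case True
    then have "m mod 3 = m' mod 3" using eq by (simp add: spot_def)
    then show ?thesis using True by (metis div_mod_decomp)
  next
    case False
    define K where "K = m' div 3 + 1"
    have "\<bar>node K - real_of_int (spot m)\<bar> \<ge> 500 * 2^(4*K+m)"
      using False by (intro spot_separation) (simp add: K_def)
    moreover have "\<bar>node K - real_of_int (spot m')\<bar> \<le> 3"
    proof -
      have "node K - real_of_int (spot m') = 3/2 - real (m' mod 3)"
        by (simp add: K_def node_def spot_def)
      moreover have "real (m' mod 3) \<le> 2" by simp
      ultimately show ?thesis by linarith
    qed
    moreover have "(1::real) \<le> 2^(4*K+m)" by simp
    ultimately show ?thesis using eq by linarith
  qed
qed

text \<open>Nodes are half-integers, hence at distance at least 1/2 from every integer.\<close>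
lemma node_int_distance: "\<bar>node k - real_of_int n\<bar> \<ge> 1/2"
proof -
  define w where "w = int (centre k) - n"
  have e: "node k - real_of_int n = real_of_int w + 1/2" by (simp add: node_def w_def)
  show ?thesis
  proof (cases "w \<ge> 0")
    case False then have "real_of_int w \<le> -1" by simp
    then show ?thesis unfolding e by simp
  qed (simp add: e)
qed

lemma node_large: "1000 * 16^k \<le> 1 + node k"
proof -
  have "(16::real)^k \<le> 256^k" by (intro power_mono) auto
  then show ?thesis by (simp add: node_def centre_def)
qed

lemma summable_majorant:
  fixes f g :: "nat \<Rightarrow> real"
  assumes "\<And>m. \<bar>f m\<bar> \<le> g m" "summable g"
  shows "summable (\<lambda>m. \<bar>f m\<bar>)" "summable f" "\<bar>suminf f\<bar> \<le> suminf g"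
proof -
  show abs: "summable (\<lambda>m. \<bar>f m\<bar>)" by (rule summable_rabs_comparison_test) (use assms in auto)
  then show "summable f" by (rule summable_rabs_cancel)
  have "\<bar>suminf f\<bar> \<le> (\<Sum>m. \<bar>f m\<bar>)" using abs by (rule summable_rabs)
  also have "\<dots> \<le> suminf g" by (rule suminf_le) (use assms abs in auto)
  finally show "\<bar>suminf f\<bar> \<le> suminf g" .
qed

lemma has_sum_along_injection:
  fixes g :: "nat \<Rightarrow> real" and p :: "nat \<Rightarrow> 'a"
  assumes p: "inj p" and g: "summable (\<lambda>m. \<bar>g m\<bar>)"
  shows "((\<lambda>n. if n \<in> range p then g (inv p n) else 0) has_sum suminf g) UNIV"
proof -
  have "(g has_sum suminf g) UNIV"
    by (rule norm_summable_imp_has_sum) (use g summable_rabs_cancel in auto)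
  moreover have "(\<lambda>n. if n \<in> range p then g (inv p n) else 0) \<circ> p = g"
    using p by auto
  ultimately have "((\<lambda>n. if n \<in> range p then g (inv p n) else 0) has_sum suminf g) (range p)"
    by (simp add: has_sum_reindex[OF p])
  then show ?thesis by (rule has_sum_cong_neutral[THEN iffD1, rotated -1]) auto
qed

lemma has_sum_int_halves:
  fixes f :: "int \<Rightarrow> real"
  assumes "summable (\<lambda>m. \<bar>f (int m)\<bar>)" "summable (\<lambda>m. \<bar>f (- int m - 1)\<bar>)"
  shows "(f has_sum ((\<Sum>m. f (int m)) + (\<Sum>m. f (- int m - 1)))) UNIV"
proof -
  have h1: "((\<lambda>m. f (int m)) has_sum (\<Sum>m. f (int m))) UNIV"
    and h2: "((\<lambda>m. f (- int m - 1)) has_sum (\<Sum>m. f (- int m - 1))) UNIV"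
    by (rule norm_summable_imp_has_sum;
        use assms summable_rabs_cancel in auto)+
  have i1: "inj (int :: nat \<Rightarrow> int)" and i2: "inj (\<lambda>m::nat. - int m - 1)"
    by (auto intro: injI)
  have a: "(f has_sum (\<Sum>m. f (int m))) (range int)"
    by (subst has_sum_reindex[OF i1]) (simp add: o_def h1)
  have b: "(f has_sum (\<Sum>m. f (- int m - 1))) (range (\<lambda>m::nat. - int m - 1))"
    by (subst has_sum_reindex[OF i2]) (simp add: o_def h2)
  have "range int \<union> range (\<lambda>m::nat. - int m - 1) = UNIV"
  proof (intro set_eqI iffI)
    fix n :: int
    show "n \<in> range int \<union> range (\<lambda>m::nat. - int m - 1)"
    proof (cases "n \<ge> 0")
      case True then have "n = int (nat n)" by simp
      then show ?thesis by blast
    next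
      case False then have "n = - int (nat (- n - 1)) - 1" by simp
      then show ?thesis by blast
    qed
  qed simp
  moreover have "range int \<inter> range (\<lambda>m::nat. - int m - 1) = {}" by auto
  ultimately show ?thesis using has_sum_Un_disjoint[OF a b] by simp
qed

subsection \<open>The sequence and its Cauchy sums at the nodes\<close>

text \<open>The unknowns: z (j, False) = x_j = a_(n_j) and z (j, True) = y_j = a_(n_j + 1).\<close>
type_synonym unknowns = "nat \<times> bool \<Rightarrow> real"

definition weight :: "nat \<Rightarrow> real" where
  "weight j = 6 / (real j)^2"

definition spot_val :: "unknowns \<Rightarrow> nat \<Rightarrow> real" where
  "spot_val z m = (if m mod 3 = 0 then weight (m div 3 + 1) else z (m div 3 + 1, m mod 3 = 2))"

definition background :: "int \<Rightarrow> real" where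
  "background n = (1/4)^(nat \<bar>n\<bar>)"

definition seq :: "unknowns \<Rightarrow> int \<Rightarrow> real" where
  "seq z n = (if n \<in> range spot then spot_val z (inv spot n) else background n)"

definition box5 :: "unknowns set" where
  "box5 = {z. \<forall>i. 0 \<le> z i \<and> z i \<le> 5}"

lemma spot_val_block:
  "spot_val z (3*j) = weight (Suc j)" "spot_val z (3*j+1) = z (Suc j, False)"
  "spot_val z (3*j+2) = z (Suc j, True)"
proof -
  have "(3*j) div 3 = j" "(3*j+1) div 3 = j" "(3*j+2) div 3 = j"
    "(3*j) mod 3 = 0" "(3*j+1) mod 3 = 1" "(3*j+2) mod 3 = 2"
    by presburger+
  then show "spot_val z (3*j) = weight (Suc j)" "spot_val z (3*j+1) = z (Suc j, False)"
    "spot_val z (3*j+2) = z (Suc j, True)"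
    by (simp_all add: spot_val_def)
qed

lemma seq_spot: "seq z (spot m) = spot_val z m"
  using inj_spot by (simp add: seq_def)

lemma weight_bounds: "j \<ge> 1 \<Longrightarrow> 0 < weight j \<and> weight j \<le> 6"
  by (auto simp: weight_def field_simps)

lemma spot_val_bounds:
  assumes "z \<in> box5" shows "0 \<le> spot_val z m \<and> spot_val z m \<le> 6"
proof -
  have "0 \<le> z i \<and> z i \<le> 5" for i using assms unfolding box5_def by blast
  then have "0 \<le> z (m div 3 + 1, m mod 3 = 2)" "z (m div 3 + 1, m mod 3 = 2) \<le> 6"
    by (smt (verit))+
  then show ?thesis using weight_bounds[of "m div 3 + 1"] by (simp add: spot_val_def)
qed

lemma spot_val_diff: "\<forall>i. \<bar>z i - z' i\<bar> \<le> \<delta> \<Longrightarrow> \<bar>spot_val z m - spot_val z' m\<bar> \<le> \<delta>"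
  by (auto simp: spot_val_def) (meson abs_ge_zero order_trans)

text \<open>The background is positive, at most 1, and decays fast enough to absorb the linear
  growth of the distance |s_k - n| relative to 1 + s_k.\<close>
lemma background_facts:
  "0 < background n" "background n \<le> 1"
  "background n * (1 + real (nat \<bar>n\<bar>)) \<le> (1/2)^(nat \<bar>n\<bar>)"
proof -
  show "0 < background n" "background n \<le> 1" by (auto simp: background_def power_le_one)
  define a where "a = nat \<bar>n\<bar>"
  have "real (Suc a) \<le> real (2^a)" by (simp only: of_nat_le_iff Suc_le_eq less_exp)
  then have "(1/2)^a * (1 + real a) \<le> (1/2)^a * 2^a" by (intro mult_left_mono) auto
  also have "\<dots> = 1" by (simp add: power_mult_distrib[symmetric])
  finally have h: "(1/2)^a * (1 + real a) \<le> 1" .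
  have "background n * (1 + real a) = (1/2)^a * ((1/2)^a * (1 + real a))"
    by (simp add: background_def a_def power_mult_distrib[symmetric])
  also have "\<dots> \<le> (1/2)^a * 1" by (intro mult_left_mono h) simp
  finally show "background n * (1 + real (nat \<bar>n\<bar>)) \<le> (1/2)^(nat \<bar>n\<bar>)" by (simp add: a_def)
qed

text \<open>For phi = id or phi = squaring, the sum over Z of phi(a_n)/(s_k - n) splits into the
  local part (the block at n_k, whose distances to s_k are 3/2, 1/2, -1/2) and the remote
  part, formed by the other blocks and the background.\<close>
definition spot_term :: "(real \<Rightarrow> real) \<Rightarrow> unknowns \<Rightarrow> nat \<Rightarrow> nat \<Rightarrow> real" where
  "spot_term \<phi> z k m = \<phi> (spot_val z m) / (node k - real_of_int (spot m))"

definition remote_spots :: "(real \<Rightarrow> real) \<Rightarrow> unknowns \<Rightarrow> nat \<Rightarrow> real" where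
  "remote_spots \<phi> z k = (\<Sum>m. if m div 3 + 1 = k then 0 else spot_term \<phi> z k m)"

definition bg_term :: "(real \<Rightarrow> real) \<Rightarrow> nat \<Rightarrow> int \<Rightarrow> real" where
  "bg_term \<phi> k n = (if n \<in> range spot then 0 else \<phi> (background n) / (node k - real_of_int n))"

definition bg_sum :: "(real \<Rightarrow> real) \<Rightarrow> nat \<Rightarrow> real" where
  "bg_sum \<phi> k = (\<Sum>m. bg_term \<phi> k (int m)) + (\<Sum>m. bg_term \<phi> k (- int m - 1))"

definition remote :: "(real \<Rightarrow> real) \<Rightarrow> unknowns \<Rightarrow> nat \<Rightarrow> real" where
  "remote \<phi> z k = remote_spots \<phi> z k + bg_sum \<phi> k"

definition local_part :: "(real \<Rightarrow> real) \<Rightarrow> unknowns \<Rightarrow> nat \<Rightarrow> real" where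
  "local_part \<phi> z k = \<phi> (weight k) * (2/3) + \<phi> (z (k, False)) * 2 - \<phi> (z (k, True)) * 2"

lemma remote_quotient_bound:
  assumes "m div 3 + 1 \<noteq> k" "\<bar>c\<bar> \<le> M"
  shows "\<bar>c / (node k - real_of_int (spot m))\<bar> \<le> M * ((1/500) * (1/2)^(4*k+m))"
proof -
  have sep: "\<bar>node k - real_of_int (spot m)\<bar> \<ge> 500 * 2^(4*k+m)"
    by (rule spot_separation[OF assms(1)])
  have "1 / \<bar>node k - real_of_int (spot m)\<bar> \<le> 1 / (500 * 2^(4*k+m))"
  proof (rule divide_left_mono[OF sep])
    show "0 < \<bar>node k - real_of_int (spot m)\<bar> * (500 * 2^(4*k+m))"
    proof (rule mult_pos_pos)
      show "(0::real) < 500 * 2^(4*k+m)" by simp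
      then show "0 < \<bar>node k - real_of_int (spot m)\<bar>" using sep by linarith
    qed
  qed simp
  also have "\<dots> = (1/500) * (1/2)^(4*k+m)" by (simp add: power_divide)
  finally have "1 / \<bar>node k - real_of_int (spot m)\<bar> \<le> (1/500) * (1/2)^(4*k+m)" .
  then have "\<bar>c\<bar> * (1 / \<bar>node k - real_of_int (spot m)\<bar>) \<le> M * ((1/500) * (1/2)^(4*k+m))"
    by (rule mult_mono[OF assms(2)]) (use assms(2) in auto)
  then show ?thesis by (simp add: abs_divide)
qed

lemma separation_series:
  "summable (\<lambda>m. M * ((1/500) * (1/2::real)^(4*k+m)))"
  "(\<Sum>m. M * ((1/500) * (1/2::real)^(4*k+m))) = M * (1/250) * (1/16)^k"
proof -
  have "(1/2::real)^(4*k+m) = (1/16)^k * (1/2)^m" for m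
    by (simp add: power_add power_mult power_divide)
  then have e: "(\<lambda>m. M * ((1/500) * (1/2::real)^(4*k+m))) = (\<lambda>m. (M * (1/500) * (1/16)^k) * (1/2)^m)"
    by (simp add: mult_ac)
  show "summable (\<lambda>m. M * ((1/500) * (1/2::real)^(4*k+m)))"
    unfolding e by (intro summable_mult summable_geometric) simp
  show "(\<Sum>m. M * ((1/500) * (1/2::real)^(4*k+m))) = M * (1/250) * (1/16)^k"
    unfolding e by (subst suminf_mult) (auto simp: suminf_geometric)
qed

lemma remote_spots_bound:
  assumes M: "\<And>m. \<bar>\<phi> (spot_val z m)\<bar> \<le> M"
  shows "summable (\<lambda>m. if m div 3 + 1 = k then 0 else spot_term \<phi> z k m)"
    "\<bar>remote_spots \<phi> z k\<bar> \<le> M * (1/250) * (1/16)^k"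
proof -
  have "0 \<le> M" using M[of 0] by linarith
  then have b: "\<bar>if m div 3 + 1 = k then 0 else spot_term \<phi> z k m\<bar>
                \<le> M * ((1/500) * (1/2)^(4*k+m))" for m
    using remote_quotient_bound[OF _ M[of m]] by (auto simp: spot_term_def)
  show "summable (\<lambda>m. if m div 3 + 1 = k then 0 else spot_term \<phi> z k m)"
    by (rule summable_majorant(2)[OF b separation_series(1)])
  show "\<bar>remote_spots \<phi> z k\<bar> \<le> M * (1/250) * (1/16)^k"
    using summable_majorant(3)[OF b separation_series(1)]
    unfolding remote_spots_def separation_series(2) .
qed

lemma remote_spots_lipschitz:
  assumes M: "\<And>m. \<bar>\<phi> (spot_val z m)\<bar> \<le> M" "\<And>m. \<bar>\<phi> (spot_val z' m)\<bar> \<le> M"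
    and L: "\<And>m. \<bar>\<phi> (spot_val z m) - \<phi> (spot_val z' m)\<bar> \<le> L"
  shows "\<bar>remote_spots \<phi> z k - remote_spots \<phi> z' k\<bar> \<le> L * (1/250) * (1/16)^k"
proof -
  let ?f = "\<lambda>z m. if m div 3 + 1 = k then 0 else spot_term \<phi> z k m"
  have "0 \<le> L" using L[of 0] by linarith
  have b: "\<bar>?f z m - ?f z' m\<bar> \<le> L * ((1/500) * (1/2)^(4*k+m))" for m
  proof (cases "m div 3 + 1 = k")
    case False
    then show ?thesis
      using remote_quotient_bound[OF False L[of m]] by (simp add: spot_term_def diff_divide_distrib)
  qed (use \<open>0 \<le> L\<close> in simp)
  have diff: "remote_spots \<phi> z k - remote_spots \<phi> z' k = (\<Sum>m. ?f z m - ?f z' m)"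
    unfolding remote_spots_def
    by (rule suminf_diff[OF remote_spots_bound(1)[where \<phi>=\<phi> and z=z and M=M and k=k, OF M(1)]
                           remote_spots_bound(1)[where \<phi>=\<phi> and z=z' and M=M and k=k, OF M(2)]])
  show ?thesis
    using summable_majorant(3)[OF b separation_series(1)] unfolding diff separation_series(2) .
qed

lemma spot_terms_summable:
  assumes M: "\<And>m. \<bar>\<phi> (spot_val z m)\<bar> \<le> M"
  shows "summable (\<lambda>m. \<bar>spot_term \<phi> z k m\<bar>)"
proof (rule summable_rabs_comparison_test)
  have "\<bar>spot_term \<phi> z k m\<bar> \<le> M * ((1/500) * (1/2)^(4*k+m))" if "3*k \<le> m" for m
  proof -
    from that have "m div 3 + 1 \<noteq> k" by auto
    then show ?thesis unfolding spot_term_def by (rule remote_quotient_bound[OF _ M])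
  qed
  then show "\<exists>N. \<forall>m\<ge>N. \<bar>spot_term \<phi> z k m\<bar> \<le> M * ((1/500) * (1/2)^(4*k+m))" by blast
qed (rule separation_series)

lemma spot_sum_split:
  assumes k: "k \<ge> 1" and M: "\<And>m. \<bar>\<phi> (spot_val z m)\<bar> \<le> M"
  shows "suminf (spot_term \<phi> z k) = local_part \<phi> z k + remote_spots \<phi> z k"
proof -
  obtain j where kj: "k = Suc j" using k by (cases k) auto
  define F where "F = {3*j, 3*j+1, 3*j+2}"
  have inF: "m div 3 + 1 = k \<longleftrightarrow> m \<in> F" for m
    unfolding F_def kj by auto
  define near where "near m = (if m div 3 + 1 = k then spot_term \<phi> z k m else 0)" for m
  have near_zero: "m \<notin> F \<Longrightarrow> near m = 0" for m using inF by (simp add: near_def)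
  have "near (3*j) = \<phi> (weight k) * (2/3)" "near (3*j+1) = \<phi> (z (k, False)) * 2"
    "near (3*j+2) = - \<phi> (z (k, True)) * 2"
    using inF unfolding F_def near_def spot_term_def spot_block spot_val_block kj node_def
    by simp_all
  then have "sum near F = local_part \<phi> z k" by (simp add: F_def local_part_def)
  moreover have "suminf near = sum near F" by (rule suminf_finite) (use near_zero F_def in auto)
  moreover have "summable near" by (rule summable_finite[of F]) (use near_zero F_def in auto)
  moreover have "suminf (spot_term \<phi> z k)
      = (\<Sum>m. near m + (if m div 3 + 1 = k then 0 else spot_term \<phi> z k m))"
    by (rule arg_cong[where f = suminf]) (auto simp: near_def)
  ultimately show ?thesis
    unfolding remote_spots_def
    using suminf_add[OF _ remote_spots_bound(1)[where \<phi>=\<phi> and z=z and M=M, OF M], of near]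
    by simp
qed

lemma bg_term_bound:
  assumes \<phi>: "\<And>y. 0 \<le> y \<Longrightarrow> y \<le> 1 \<Longrightarrow> \<bar>\<phi> y\<bar> \<le> y"
  shows "\<bar>bg_term \<phi> k n\<bar> \<le> 3 * (1/2)^(nat \<bar>n\<bar>) / (1 + node k)"
proof (cases "n \<in> range spot")
  case True then show ?thesis by (simp add: bg_term_def node_def)
next
  case False
  define a where "a = nat \<bar>n\<bar>"
  define d where "d = \<bar>node k - real_of_int n\<bar>"
  have d2: "d \<ge> 1/2" unfolding d_def by (rule node_int_distance)
  have "node k \<le> real a + d" unfolding d_def a_def by simp
  moreover have "1 * real a \<le> (2 * d) * real a" using d2 by (intro mult_right_mono) auto
  ultimately have "1 + node k \<le> 3 * d * (1 + real a)" using d2 by (simp add: algebra_simps)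
  have bg: "0 < background n" "background n \<le> 1" "background n * (1 + real a) \<le> (1/2)^a"
    using background_facts[of n] by (simp_all add: a_def)
  have "\<bar>bg_term \<phi> k n\<bar> = \<bar>\<phi> (background n)\<bar> / d" using False by (simp add: bg_term_def d_def abs_divide)
  also have "\<dots> \<le> background n / d" using \<phi>[of "background n"] bg d2 by (intro divide_right_mono) auto
  also have "\<dots> \<le> 3 * (1/2)^a / (1 + node k)"
  proof -
    have "background n * (1 + node k) \<le> background n * (3 * d * (1 + real a))"
      using \<open>1 + node k \<le> 3 * d * (1 + real a)\<close> bg by (intro mult_left_mono) auto
    also have "\<dots> = 3 * d * (background n * (1 + real a))" by simp
    also have "\<dots> \<le> 3 * d * (1/2)^a" using bg d2 by (intro mult_left_mono) auto
    finally have "background n * (1 + node k) \<le> 3 * (1/2)^a * d" by (simp add: mult_ac)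
    moreover have "node k > 0" by (simp add: node_def)
    ultimately show ?thesis using d2 by (simp add: divide_simps mult_ac)
  qed
  finally show ?thesis by (simp add: a_def)
qed

lemma bg_sum_bound:
  assumes \<phi>: "\<And>y. 0 \<le> y \<Longrightarrow> y \<le> 1 \<Longrightarrow> \<bar>\<phi> y\<bar> \<le> y"
  shows "summable (\<lambda>m. \<bar>bg_term \<phi> k (int m)\<bar>)" "summable (\<lambda>m. \<bar>bg_term \<phi> k (- int m - 1)\<bar>)"
    "\<bar>bg_sum \<phi> k\<bar> \<le> (12/1000) * (1/16)^k"
proof -
  define c where "c = 3 / (1 + node k)"
  have c0: "c \<ge> 0" by (simp add: c_def node_def)
  have g: "summable (\<lambda>m. c * (1/2::real)^m)" "(\<Sum>m. c * (1/2::real)^m) = 2 * c"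
    by (auto intro!: summable_mult summable_geometric simp: suminf_mult suminf_geometric)
  have b1: "\<bar>bg_term \<phi> k (int m)\<bar> \<le> c * (1/2)^m" for m
    using bg_term_bound[OF \<phi>, of k "int m"] by (simp add: c_def)
  have b2: "\<bar>bg_term \<phi> k (- int m - 1)\<bar> \<le> c * (1/2)^m" for m
  proof -
    have "nat \<bar>- int m - 1\<bar> = Suc m" by simp
    then have "\<bar>bg_term \<phi> k (- int m - 1)\<bar> \<le> c * (1/2)^(Suc m)"
      using bg_term_bound[OF \<phi>, of k "- int m - 1"] by (simp add: c_def algebra_simps)
    also have "\<dots> \<le> c * (1/2)^m" using c0 by (intro mult_left_mono) (auto simp: power_decreasing)
    finally show ?thesis .
  qed
  show "summable (\<lambda>m. \<bar>bg_term \<phi> k (int m)\<bar>)" by (rule summable_majorant(1)[OF b1 g(1)])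
  show "summable (\<lambda>m. \<bar>bg_term \<phi> k (- int m - 1)\<bar>)" by (rule summable_majorant(1)[OF b2 g(1)])
  have "\<bar>bg_sum \<phi> k\<bar> \<le> \<bar>\<Sum>m. bg_term \<phi> k (int m)\<bar> + \<bar>\<Sum>m. bg_term \<phi> k (- int m - 1)\<bar>"
    unfolding bg_sum_def by (rule abs_triangle_ineq)
  also have "\<dots> \<le> 4 * c"
    using summable_majorant(3)[OF b1 g(1)] summable_majorant(3)[OF b2 g(1)] g(2) by linarith
  also have "\<dots> = 12 / (1 + node k)" by (simp add: c_def)
  also have "\<dots> \<le> 12 / (1000 * 16^k)"
    using node_large[of k] by (intro divide_left_mono mult_pos_pos) (auto simp: node_def)
  also have "\<dots> = (12/1000) * (1/16)^k" by (simp add: power_divide)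
  finally show "\<bar>bg_sum \<phi> k\<bar> \<le> (12/1000) * (1/16)^k" .
qed

lemma cauchy_sum_at_node:
  assumes z: "z \<in> box5" and k: "k \<ge> 1"
    and M: "\<And>y. 0 \<le> y \<Longrightarrow> y \<le> 6 \<Longrightarrow> \<bar>\<phi> y\<bar> \<le> M"
    and \<phi>: "\<And>y. 0 \<le> y \<Longrightarrow> y \<le> 1 \<Longrightarrow> \<bar>\<phi> y\<bar> \<le> y"
  shows "((\<lambda>n. \<phi> (seq z n) / (node k - real_of_int n)) has_sum (local_part \<phi> z k + remote \<phi> z k)) UNIV"
proof -
  have Mv: "\<And>m. \<bar>\<phi> (spot_val z m)\<bar> \<le> M" using M spot_val_bounds[OF z] by blast
  have spots: "((\<lambda>n. if n \<in> range spot then spot_term \<phi> z k (inv spot n) else 0)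
                 has_sum suminf (spot_term \<phi> z k)) UNIV"
    by (rule has_sum_along_injection[OF inj_spot spot_terms_summable[where \<phi>=\<phi> and z=z and M=M, OF Mv]])
  have bg: "(bg_term \<phi> k has_sum bg_sum \<phi> k) UNIV"
    unfolding bg_sum_def by (rule has_sum_int_halves[OF bg_sum_bound(1,2)[OF \<phi>]])
  have split: "(\<lambda>n. \<phi> (seq z n) / (node k - real_of_int n))
        = (\<lambda>n. (if n \<in> range spot then spot_term \<phi> z k (inv spot n) else 0) + bg_term \<phi> k n)"
  proof
    fix n
    show "\<phi> (seq z n) / (node k - real_of_int n)
          = (if n \<in> range spot then spot_term \<phi> z k (inv spot n) else 0) + bg_term \<phi> k n"
    proof (cases "n \<in> range spot")
      case True
      then have "spot (inv spot n) = n" by (simp add: f_inv_into_f)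
      then show ?thesis using True by (simp add: seq_def spot_term_def bg_term_def)
    qed (simp add: seq_def bg_term_def)
  qed
  show ?thesis unfolding split using has_sum_add[OF spots bg] spot_sum_split[OF k, where \<phi>=\<phi> and z=z and M=M, OF Mv]
    by (simp add: remote_def add.assoc)
qed

text \<open>16^k beats k^4; this converts the 16^(-k) decay of remote parts into powers of 1/k.\<close>
lemma power16_ge_fourth_power: "(real k)^4 \<le> 16^k"
proof -
  have "real k < real (2^k)" by (simp only: of_nat_less_iff less_exp)
  then have "real k \<le> 2^k" by simp
  then have "(real k)^4 \<le> ((2::real)^k)^4" by (intro power_mono) simp_all
  also have "\<dots> = (2^4)^k" by (metis power_mult mult.commute)
  finally show ?thesis by simp
qed

lemma sixteenth_power_decay:
  assumes "k \<ge> 1"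
  shows "(1/16::real)^k \<le> 1 / ((real k)^2)^2" "(real k)^2 * (1/16::real)^k \<le> 1"
    "(1/16::real)^k \<le> 1 / (real k)^2"
proof -
  have k4: "((real k)^2)^2 \<le> 16^k" using power16_ge_fourth_power[of k] by simp
  have "1 \<le> (real k)^2" using assms by simp
  then have "(real k)^2 * 1 \<le> (real k)^2 * (real k)^2" by (intro mult_left_mono) simp_all
  then have k2: "(real k)^2 \<le> ((real k)^2)^2" by (simp only: power2_eq_square[of "(real k)^2"])
  have p: "(real k)^2 > 0" using assms by simp
  show "(1/16::real)^k \<le> 1 / ((real k)^2)^2" using k4 p by (simp add: power_divide divide_simps)
  show "(real k)^2 * (1/16::real)^k \<le> 1" using k2 k4 p by (simp add: power_divide divide_simps)
  show "(1/16::real)^k \<le> 1 / (real k)^2" using k2 k4 p by (simp add: power_divide divide_simps)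
qed

text \<open>Inside the box the remote parts are small enough for the bounds of the explicit
  solution (u = k^2).\<close>
lemma remote_bounds:
  assumes z: "z \<in> box5" and k: "k \<ge> 1"
  shows "\<bar>remote id z k\<bar> \<le> 1/(20*(real k)^2)" "\<bar>remote (\<lambda>x. x^2) z k\<bar> \<le> 1/((real k)^2)^2"
proof -
  have v: "0 \<le> spot_val z m" "spot_val z m \<le> 6" for m using spot_val_bounds[OF z] by auto
  have "\<bar>remote_spots id z k\<bar> \<le> 6 * (1/250) * (1/16)^k"
    by (rule remote_spots_bound(2)) (use v in auto)
  moreover have "\<bar>bg_sum id k\<bar> \<le> (12/1000) * (1/16)^k" by (rule bg_sum_bound(3)) auto
  ultimately have "\<bar>remote id z k\<bar> \<le> (36/1000) * (1/16)^k" unfolding remote_def by linarith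
  also have "\<dots> \<le> (36/1000) * (1 / (real k)^2)" by (intro mult_left_mono sixteenth_power_decay k) auto
  also have "\<dots> \<le> 1/(20*(real k)^2)" using k by (simp add: field_simps)
  finally show "\<bar>remote id z k\<bar> \<le> 1/(20*(real k)^2)" .
  have "(spot_val z m)^2 \<le> 6^2" for m using v[of m] by (intro power_mono) auto
  then have "\<bar>remote_spots (\<lambda>x. x^2) z k\<bar> \<le> 36 * (1/250) * (1/16)^k"
    by (intro remote_spots_bound(2)) simp
  moreover have "\<bar>bg_sum (\<lambda>x. x^2) k\<bar> \<le> (12/1000) * (1/16)^k"
    by (rule bg_sum_bound(3)) (simp add: power2_eq_square mult_left_le_one_le)
  ultimately have "\<bar>remote (\<lambda>x. x^2) z k\<bar> \<le> (156/1000) * (1/16)^k" unfolding remote_def by linarith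
  also have "\<dots> \<le> (156/1000) * (1 / ((real k)^2)^2)" by (intro mult_left_mono sixteenth_power_decay k) auto
  also have "\<dots> \<le> 1/((real k)^2)^2" using k by (simp add: field_simps)
  finally show "\<bar>remote (\<lambda>x. x^2) z k\<bar> \<le> 1/((real k)^2)^2" .
qed

lemma remote_lipschitz:
  assumes z: "z \<in> box5" and z': "z' \<in> box5" and d: "\<forall>i. \<bar>z i - z' i\<bar> \<le> \<delta>"
  shows "\<bar>remote id z k - remote id z' k\<bar> \<le> \<delta> * (1/250) * (1/16)^k"
    "\<bar>remote (\<lambda>x. x^2) z k - remote (\<lambda>x. x^2) z' k\<bar> \<le> (12*\<delta>) * (1/250) * (1/16)^k"
proof -
  have v: "0 \<le> spot_val z m" "spot_val z m \<le> 6" "0 \<le> spot_val z' m" "spot_val z' m \<le> 6" for m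
    using spot_val_bounds[OF z] spot_val_bounds[OF z'] by auto
  have vd: "\<bar>spot_val z m - spot_val z' m\<bar> \<le> \<delta>" for m by (rule spot_val_diff[OF d])
  show "\<bar>remote id z k - remote id z' k\<bar> \<le> \<delta> * (1/250) * (1/16)^k"
    unfolding remote_def using remote_spots_lipschitz[of id z 6 z' \<delta> k] v vd by simp
  have sq: "\<bar>(spot_val z m)^2\<bar> \<le> 36" "\<bar>(spot_val z' m)^2\<bar> \<le> 36" for m
  proof -
    have "(spot_val z m)^2 \<le> 6^2" "(spot_val z' m)^2 \<le> 6^2" using v[of m] by (intro power_mono; simp)+
    then show "\<bar>(spot_val z m)^2\<bar> \<le> 36" "\<bar>(spot_val z' m)^2\<bar> \<le> 36" by simp_all
  qed
  have sqd: "\<bar>(spot_val z m)^2 - (spot_val z' m)^2\<bar> \<le> 12 * \<delta>" for m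
  proof -
    have "\<bar>(spot_val z m)^2 - (spot_val z' m)^2\<bar> = \<bar>spot_val z m - spot_val z' m\<bar> * \<bar>spot_val z m + spot_val z' m\<bar>"
      by (simp add: power2_eq_square abs_mult[symmetric] algebra_simps)
    also have "\<dots> \<le> \<delta> * 12" using vd[of m] v[of m] by (intro mult_mono) auto
    finally show ?thesis by simp
  qed
  show "\<bar>remote (\<lambda>x. x^2) z k - remote (\<lambda>x. x^2) z' k\<bar> \<le> (12*\<delta>) * (1/250) * (1/16)^k"
    unfolding remote_def using remote_spots_lipschitz[of "\<lambda>x. x^2" z 36 z' "12*\<delta>" k] sq sqd by simp
qed

subsection \<open>The fixed-point problem\<close>

text \<open>The update map: new unknowns are the explicit solutions of the block equations with
  the remote parts computed from the old unknowns. Index 0 is unused and set to 0.\<close>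
definition update :: "unknowns \<Rightarrow> unknowns" where
  "update z = (\<lambda>(k, b). if k = 0 then 0
     else (if b then sol_y else sol_x) (weight k) (remote id z k) (remote (\<lambda>x. x^2) z k))"

lemma update_values:
  assumes z: "z \<in> box5" and k: "k \<ge> 1"
  shows "1/(real k)^2 < update z (k, False)" "update z (k, False) < 3/(real k)^2"
    "0 < update z (k, True)" "update z (k, True) \<le> 5/(real k)^2"
proof -
  have "(real k)^2 \<ge> 1" using k by simp
  note sol = sol_bounds[OF this remote_bounds[OF z k]]
  show "1/(real k)^2 < update z (k, False)" "update z (k, False) < 3/(real k)^2"
    "0 < update z (k, True)" "update z (k, True) \<le> 5/(real k)^2"
    using sol k by (simp_all add: update_def weight_def)
qed

lemma update_in_box:
  assumes z: "z \<in> box5" shows "0 \<le> update z i \<and> update z i \<le> 5"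
proof -
  obtain k b where i: "i = (k, b)" by (cases i)
  show ?thesis
  proof (cases "k = 0")
    case False
    then have k: "k \<ge> 1" by simp
    then have "1/(real k)^2 \<le> 1" by simp
    then have "3/(real k)^2 \<le> 3" "5/(real k)^2 \<le> 5" by (simp_all add: divide_le_eq)
    moreover have "0 < 1/(real k)^2" using k by simp
    ultimately show ?thesis using update_values[OF z k] unfolding i by (cases b) auto
  qed (simp add: i update_def)
qed

text \<open>The update halves sup distances: the solution is Lipschitz in the remote parts with
  constants k^2/4 and 5, and these move by at most 12 \<delta> 16^(-k)/250 and \<delta> 16^(-k)/250.\<close>
lemma update_halving:
  assumes z: "z \<in> box5" and z': "z' \<in> box5" and d: "\<forall>i. \<bar>z i - z' i\<bar> \<le> \<delta>"
  shows "\<forall>i. \<bar>update z i - update z' i\<bar> \<le> \<delta>/2"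
proof
  fix i :: "nat \<times> bool"
  have d0: "\<delta> \<ge> 0" using d by (meson abs_ge_zero order_trans)
  obtain k b where i: "i = (k, b)" by (cases i)
  show "\<bar>update z i - update z' i\<bar> \<le> \<delta>/2"
  proof (cases "k = 0")
    case False
    then have k: "k \<ge> 1" by simp
    define u where "u = (real k)^2"
    have u: "u \<ge> 1" using k by (simp add: u_def)
    define g where "g = (1/16::real)^k"
    have ug: "u * g \<le> 1" "g \<le> 1" using sixteenth_power_decay(2)[OF k]
      by (simp_all add: u_def g_def power_le_one)
    define R1 R2 P1 P2 where "R1 = remote id z k" "R2 = remote id z' k"
      "P1 = remote (\<lambda>x. x^2) z k" "P2 = remote (\<lambda>x. x^2) z' k"
    have L: "\<bar>R1 - R2\<bar> \<le> \<delta> * (1/250) * g" "\<bar>P1 - P2\<bar> \<le> (12*\<delta>) * (1/250) * g"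
      using remote_lipschitz[OF z z' d] by (simp_all add: R1_R2_P1_P2_def g_def)
    have B: "\<bar>R1\<bar> \<le> 1/(20*u)" "\<bar>R2\<bar> \<le> 1/(20*u)" "\<bar>P1\<bar> \<le> 1/u^2" "\<bar>P2\<bar> \<le> 1/u^2"
      using remote_bounds[OF z k] remote_bounds[OF z' k] by (simp_all add: R1_R2_P1_P2_def u_def)
    have "(u/4) * \<bar>P1 - P2\<bar> \<le> (u/4) * ((12*\<delta>) * (1/250) * g)" using u by (intro mult_left_mono L(2)) auto
    also have "\<dots> = (3*\<delta>/250) * (u * g)" by simp
    also have "\<dots> \<le> (3*\<delta>/250) * 1" using d0 ug by (intro mult_left_mono) auto
    finally have t1: "(u/4) * \<bar>P1 - P2\<bar> \<le> 3*\<delta>/250" by simp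
    have "\<delta> * (1/250) * g \<le> \<delta> * (1/250) * 1" using d0 ug by (intro mult_left_mono) auto
    then have t2: "5 * \<bar>R1 - R2\<bar> \<le> 5*\<delta>/250" using L(1) by simp
    have "update z i = (if b then sol_y else sol_x) (6/u) R1 P1"
      "update z' i = (if b then sol_y else sol_x) (6/u) R2 P2"
      using False by (simp_all add: i update_def u_def weight_def R1_R2_P1_P2_def)
    then show ?thesis using sol_lipschitz[OF u B] t1 t2 d0 by (cases b) auto
  qed (use d0 in \<open>simp add: i update_def\<close>)
qed

lemma update_fixpoint: "\<exists>z\<in>box5. update z = z"
  unfolding box5_def
proof (rule box_contraction_fixpoint)
  show "\<And>z i. z \<in> {z. \<forall>i. 0 \<le> z i \<and> z i \<le> 5} \<Longrightarrow> 0 \<le> update z i \<and> update z i \<le> 5"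
    using update_in_box unfolding box5_def by blast
  show "\<And>z z' \<delta>. z \<in> {z. \<forall>i. 0 \<le> z i \<and> z i \<le> 5} \<Longrightarrow> z' \<in> {z. \<forall>i. 0 \<le> z i \<and> z i \<le> 5} \<Longrightarrow>
      \<forall>i. \<bar>z i - z' i\<bar> \<le> \<delta> \<Longrightarrow> \<forall>i. \<bar>update z i - update z' i\<bar> \<le> \<delta> / 2"
    using update_halving unfolding box5_def by blast
qed simp

lemma fixpoint_cancellation:
  assumes z: "z \<in> box5" and fixed: "update z = z" and k: "k \<ge> 1"
  shows "local_part id z k + remote id z k = 0"
    "local_part (\<lambda>x. x^2) z k + remote (\<lambda>x. x^2) z k = 0"
proof -
  define u R P where "u = (real k)^2" "R = remote id z k" "P = remote (\<lambda>x. x^2) z k"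
  have u: "u \<ge> 1" using k by (simp add: u_R_P_def)
  have t: "weight k = 6/u" by (simp add: weight_def u_R_P_def)
  have x: "z (k, False) = sol_x (6/u) R P" and y: "z (k, True) = sol_y (6/u) R P"
    using fun_cong[OF fixed, of "(k, False)"] fun_cong[OF fixed, of "(k, True)"] k
    by (simp_all add: update_def u_R_P_def weight_def)
  have "\<bar>R\<bar> \<le> 1/(20*u)" "\<bar>P\<bar> \<le> 1/u^2" using remote_bounds[OF z k] by (simp_all add: u_R_P_def)
  then have "gap (6/u) R \<ge> 1/u" by (rule sol_bounds(1)[OF u])
  then have "gap (6/u) R \<noteq> 0" using u by (smt (verit) divide_pos_pos)
  note sol = sol_solves[OF this, of P]
  show "local_part id z k + remote id z k = 0"
    using sol(1) unfolding local_part_def x y t u_R_P_def(2)[symmetric] by (simp add: gap_def)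
  show "local_part (\<lambda>x. x^2) z k + remote (\<lambda>x. x^2) z k = 0"
    using sol(2) unfolding local_part_def x y t u_R_P_def(3)[symmetric] by (simp add: sq_gap_def)
qed

lemma fixpoint_spot_val_decay:
  assumes z: "z \<in> box5" and fixed: "update z = z"
  shows "0 < spot_val z m" "spot_val z m \<le> 54 / (real (Suc m))^2"
proof -
  define j where "j = m div 3 + 1"
  have j: "j \<ge> 1" by (simp add: j_def)
  have "z (j, b) = update z (j, b)" for b using fixed by simp
  then have "0 < z (j, b) \<and> z (j, b) \<le> 6/(real j)^2" for b
    using update_values[OF z j] j by (cases b) (auto simp: divide_right_mono)
  then have v: "0 < spot_val z m \<and> spot_val z m \<le> 6/(real j)^2"
    using weight_bounds[OF j] unfolding spot_val_def j_def[symmetric] by (auto simp: weight_def)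
  have "real (Suc m) \<le> 3 * real j" unfolding j_def by simp
  then have "(real (Suc m))^2 \<le> (3 * real j)^2" by (intro power_mono) auto
  then have "6/(real j)^2 \<le> 54 / (real (Suc m))^2" using j by (simp add: field_simps)
  then show "0 < spot_val z m" "spot_val z m \<le> 54 / (real (Suc m))^2" using v by auto
qed

lemma fixpoint_seq_summable:
  assumes z: "z \<in> box5" and fixed: "update z = z"
  shows "(\<lambda>n. norm (seq z n)) summable_on (UNIV :: int set)"
proof -
  note decay = fixpoint_spot_val_decay[OF z fixed]
  have "summable (\<lambda>m. inverse ((real (Suc m))^2))"
    using inverse_power_summable[of 2, where 'a=real] by (subst summable_Suc_iff) simp
  then have "summable (\<lambda>m. 54 / (real (Suc m))^2)"
    using summable_mult[of _ 54] by (simp add: divide_inverse)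
  then have "summable (\<lambda>m. \<bar>\<bar>spot_val z m\<bar>\<bar>)"
    by (rule summable_comparison_test'[of _ 0]) (use decay in \<open>simp add: less_imp_le\<close>)
  then have spots: "((\<lambda>n. if n \<in> range spot then \<bar>spot_val z (inv spot n)\<bar> else 0)
                    has_sum (\<Sum>m. \<bar>spot_val z m\<bar>)) UNIV"
    by (rule has_sum_along_injection[OF inj_spot])
  have "summable (\<lambda>m. \<bar>background (int m)\<bar>)" "summable (\<lambda>m. \<bar>background (- int m - 1)\<bar>)"
    by (simp_all add: background_def nat_add_distrib summable_geometric)
  note bg = has_sum_int_halves[OF this]
  have "(\<lambda>n. (if n \<in> range spot then \<bar>spot_val z (inv spot n)\<bar> else 0) + background n) summable_on UNIV"
    using has_sum_add[OF spots bg] by (rule has_sum_imp_summable)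
  then show ?thesis
    by (rule summable_on_comparison_test)
       (use background_facts(1) in \<open>auto simp: seq_def less_imp_le\<close>)
qed

lemma fixpoint_seq_pos:
  assumes z: "z \<in> box5" and fixed: "update z = z"
  shows "seq z n > 0"
  using fixpoint_spot_val_decay(1)[OF z fixed] background_facts(1) by (simp add: seq_def)

lemma sin_cauchy_vanishes:
  assumes "((\<lambda>n. b n / (s - real_of_int n)) has_sum 0) UNIV"
  shows "sin_cauchy b (of_real s) = 0"
proof -
  have "((\<lambda>n. complex_of_real (b n / (s - real_of_int n))) has_sum of_real 0) UNIV"
    by (rule has_sum_of_real[OF assms])
  then have "((\<lambda>n. complex_of_real (b n) / (complex_of_real s - of_int n)) has_sum 0) UNIV"
    by simp
  then show ?thesis by (simp add: sin_cauchy_def infsumI)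
qed

lemma fixpoint_sin_cauchy:
  assumes z: "z \<in> box5" and fixed: "update z = z" and k: "k \<ge> 1"
  shows "sin_cauchy (seq z) (of_real (node k)) = 0"
    "sin_cauchy (\<lambda>n. (seq z n)^2) (of_real (node k)) = 0"
proof -
  have "((\<lambda>n. id (seq z n) / (node k - real_of_int n)) has_sum 0) UNIV"
    using cauchy_sum_at_node[OF z k, of id 6] fixpoint_cancellation(1)[OF z fixed k] by simp
  then show "sin_cauchy (seq z) (of_real (node k)) = 0" by (intro sin_cauchy_vanishes) simp
  have "((\<lambda>n. (seq z n)^2 / (node k - real_of_int n)) has_sum 0) UNIV"
  proof (rule cauchy_sum_at_node[OF z k, of "\<lambda>x. x^2" 36, unfolded fixpoint_cancellation(2)[OF z fixed k]])
    fix y :: real assume "0 \<le> y" "y \<le> 6"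
    then have "y^2 \<le> 6^2" by (intro power_mono) auto
    then show "\<bar>y^2\<bar> \<le> 36" by simp
  next
    fix y :: real assume "0 \<le> y" "y \<le> 1"
    then show "\<bar>y^2\<bar> \<le> y" by (simp add: power2_eq_square mult_left_le_one_le)
  qed
  then show "sin_cauchy (\<lambda>n. (seq z n)^2) (of_real (node k)) = 0" by (rule sin_cauchy_vanishes)
qed

lemma fixpoint_seq_at_centre:
  assumes z: "z \<in> box5" and fixed: "update z = z" and k: "k \<ge> 1"
  shows "\<exists>\<alpha>::real. 1 < \<alpha> \<and> \<alpha> < 3 \<and> seq z (int (centre k)) = \<alpha> / (real k)^2"
proof -
  obtain j where kj: "k = Suc j" using k by (cases k) auto
  have "seq z (int (centre k)) = z (k, False)"
    using seq_spot[of z "3*j+1"] unfolding spot_block spot_val_block kj .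
  also have "\<dots> = update z (k, False)" using fixed by simp
  finally have a: "seq z (int (centre k)) = update z (k, False)" .
  have kp: "(real k)^2 > 0" using k by simp
  show ?thesis
  proof (intro exI conjI)
    show "1 < update z (k, False) * (real k)^2" "update z (k, False) * (real k)^2 < 3"
      using update_values(1,2)[OF z k] kp by (simp_all add: field_simps)
    show "seq z (int (centre k)) = update z (k, False) * (real k)^2 / (real k)^2"
      using a kp by simp
  qed
qed

theorem proposition4p1:
  shows "\<exists>(a :: int \<Rightarrow> real) (nk :: nat \<Rightarrow> nat).
     (\<lambda>n. norm (a n)) summable_on (UNIV :: int set) \<and>
     (\<forall>n. a n > 0) \<and>
     nk 1 \<ge> 1 \<and>
     (\<forall>k\<ge>1. nk (Suc k) > 2 * nk k) \<and>
     (\<forall>k\<ge>1. sin_cauchy a (of_real (real (nk k) + 1/2)) = 0 \<and>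
              sin_cauchy (\<lambda>n. (a n)\<^sup>2) (of_real (real (nk k) + 1/2)) = 0) \<and>
     (\<forall>k\<ge>1. \<exists>\<alpha>::real. 1 < \<alpha> \<and> \<alpha> < 3 \<and> a (int (nk k)) = \<alpha> / (real k)\<^sup>2)"
proof -
  obtain z where z: "z \<in> box5" and fixed: "update z = z" using update_fixpoint by blast
  show ?thesis
  proof (intro exI[of _ "seq z"] exI[of _ centre] conjI allI impI)
    show "(\<lambda>n. norm (seq z n)) summable_on UNIV" by (rule fixpoint_seq_summable[OF z fixed])
    show "seq z n > 0" for n by (rule fixpoint_seq_pos[OF z fixed])
    show "centre 1 \<ge> 1" "centre (Suc k) > 2 * centre k" for k by (simp_all add: centre_def)
    fix k :: nat assume k: "k \<ge> 1"
    show "sin_cauchy (seq z) (of_real (real (centre k) + 1/2)) = 0"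
      "sin_cauchy (\<lambda>n. (seq z n)\<^sup>2) (of_real (real (centre k) + 1/2)) = 0"
      using fixpoint_sin_cauchy[OF z fixed k] by (simp_all add: node_def)
    show "\<exists>\<alpha>::real. 1 < \<alpha> \<and> \<alpha> < 3 \<and> seq z (int (centre k)) = \<alpha> / (real k)\<^sup>2"
      by (rule fixpoint_seq_at_centre[OF z fixed k])
  qed
qed

end
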